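(* Let $K$ be a field and let $L\in K^{n\times n}[s]$, $L_1\in K^{n_1\times n_1}[s]$ be nonsingular polynomial matrices. A map $\phi:U^L\to U^{L_1}$ is a $K_\infty(s)$-module homomorphism if and only if there exist matrices $\Theta,\Theta_1\in K^{n_1\times n}_\infty(s)$ such that $$\Theta L=L_1\Theta_1\qquad\text{and}\qquad \phi\bar x=\rho_e^{L_1}(\Theta\bar x)\ \text{ for all }\bar x\in U^L.$$ Moreover, if $\Theta,\Theta_1\in K^{n_1\times n}_\infty(s)$ satisfy $\Theta L=L_1\Theta_1$, then $\rho_e^{L_1}(\Theta\bar x)=\rho^{L_1}(\Theta x)$ for all $x\in K^n_\infty(s)$, where $\bar x=\rho^L x$.
   Context: $K(s)$ denotes the field of rational functions over $K$. A rational function $f$ is proper if $f=0$ or $f=p/q$ with $p,q\in K[s]$, $q\ne0$, $\deg p\le\deg q$; $K_\infty(s)$ is the ring of proper rational functions, and $K^n_\infty(s)$, $K^{m\times r}_\infty(s)$ denote vectors/matrices with proper rational entries. One has $K(s)=K[s]\oplus s^{-1}K_\infty(s)$; $\pi_+:K(s)\to K[s]$ denotes the projection onto the polynomial part along $s^{-1}K_\infty(s)$, extended entrywise to vectors and matrices. For a nonsingular $L\in K^{n\times n}[s]$, define $\rho^L:K^n_\infty(s)\to K^n[s]$ by $\rho^L x=L\,\pi_+(L^{-1}x)$, write $\bar x=\rho^Lx$, and let $U^L=\operatorname{Im}\rho^L$. Since $\operatorname{Ker}\rho^L=K^n_\infty(s)\cap s^{-1}LK^n_\infty(s)$, $U^L$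 is a $K_\infty(s)$-module via $q\cdot\bar x=\overline{qx}$ for $q\in K_\infty(s)$. The extension $\rho_e^{L_1}:K^{n_1}(s)\to K^{n_1}[s]$ is defined by $\rho_e^{L_1}w=L_1\pi_+(L_1^{-1}w)$ for $w\in K^{n_1}(s)$. *)

theory Defs
  imports "HOL-Analysis.Analysis" "HOL-Computational_Algebra.Computational_Algebra"
         
begin

type_synonym 'a ratf = "'a poly fract"

definition emb :: "'a::field poly \<Rightarrow> 'a ratf" where
  "emb p = Fract p 1"

definition proper :: "'a::field ratf \<Rightarrow> bool" where
  "proper f \<longleftrightarrow> f = 0 \<or> (\<exists>p q. q \<noteq> 0 \<and> f = Fract p q \<and> degree p \<le> degree q)"

text \<open>polynomial part pi_+ (projection along s^{-1} K_infty(s)): for f = p/q it is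
  the polynomial quotient p div q (independent of the chosen representation)\<close>
definition pi_plus :: "'a::field ratf \<Rightarrow> 'a ratf" where
  "pi_plus f = emb (SOME r. \<exists>p q. q \<noteq> 0 \<and> f = Fract p q \<and> r = p div q)"

definition pi_plus_vec :: "'a::field ratf ^'n \<Rightarrow> 'a ratf ^'n" where
  "pi_plus_vec v = (\<chi> i. pi_plus (v $ i))"

definition emb_mat :: "'a::field poly ^'n^'m \<Rightarrow> 'a ratf ^'n^'m" where
  "emb_mat L = (\<chi> i j. emb (L $ i $ j))"

definition proper_vecs :: "('a::field ratf ^'n) set" where
  "proper_vecs = {x. \<forall>i. proper (x $ i)}"

definition proper_mat :: "'a::field ratf ^'n^'m \<Rightarrow> bool" where
  "proper_mat T \<longleftrightarrow> (\<forall>i j. proper (T $ i $ j))"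

definition rho_e :: "'a::field poly ^'n^'n \<Rightarrow> 'a ratf ^'n \<Rightarrow> 'a ratf ^'n" where
  "rho_e L w = emb_mat L *v pi_plus_vec (matrix_inv (emb_mat L) *v w)"

text \<open>rho^L, meant to be applied to proper vectors only\<close>
definition rho :: "'a::field poly ^'n^'n \<Rightarrow> 'a ratf ^'n \<Rightarrow> 'a ratf ^'n" where
  "rho L x = emb_mat L *v pi_plus_vec (matrix_inv (emb_mat L) *v x)"

definition U :: "'a::field poly ^'n^'n \<Rightarrow> ('a ratf ^'n) set" where
  "U L = rho L ` proper_vecs"

definition act :: "'a::field poly ^'n^'n \<Rightarrow> 'a ratf \<Rightarrow> 'a ratf ^'n \<Rightarrow> 'a ratf ^'n" where
  "act L q xb = rho L (q *s (SOME x. x \<in> proper_vecs \<and> rho L x = xb))"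

definition Kinf_module_hom ::
  "'a::field poly ^'n^'n \<Rightarrow> 'a poly ^'m^'m \<Rightarrow> ('a ratf ^'n \<Rightarrow> 'a ratf ^'m) \<Rightarrow> bool" where
  "Kinf_module_hom L L1 \<phi> \<longleftrightarrow>
     (\<forall>xb\<in>U L. \<phi> xb \<in> U L1) \<and>
     (\<forall>xb\<in>U L. \<forall>yb\<in>U L. \<phi> (xb + yb) = \<phi> xb + \<phi> yb) \<and>
     (\<forall>q xb. proper q \<and> xb \<in> U L \<longrightarrow> \<phi> (act L q xb) = act L1 q (\<phi> xb))"

end

(* Write deg (p/q) = deg p - deg q. Proper means deg <= 0, strictly proper deg <= -1, and pi_+ f
   is the unique polynomial a with f - a strictly proper, so rho^L x = rho^L y iff L^-1 (x - y) is
   strictly proper. If Theta L = L1 Theta1 with Theta1 proper, then Theta maps L times a strictly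
   proper vector to L1 times a strictly proper vector; this is the "moreover" identity, and it makes
   x |-> rho^L1 (Theta x) a well defined homomorphism on U^L.

   Conversely, a K_inf(s)-linear phi is determined by the images of the unit vectors, so
   phi (rho^L x) = rho^L1 (T x) for a proper T mapping the kernel of rho^L into that of rho^L1.
   To make L1^-1 T L proper, bring L to column reduced form L B = H diag (s^d_j) with B, H
   biproper. The columns of H with d_j >= 1 lie in the kernel of rho^L, and discarding them,
   Theta = T H E H^-1 with E = diag (d_j <= 0), induces the same map with L1^-1 Theta L proper. *)

theory Submission
  imports Defs
begin

no_notation fps_nth (infixl "$" 75)

section \<open>Degree at infinity\<close>

lemma emb_eq_to_fract: "emb = to_fract"
  by (simp add: fun_eq_iff emb_def to_fract_def)

lemma Fract_eq_0_iff: "(q::'a::idom) \<noteq> 0 \<Longrightarrow> Fract p q = 0 \<longleftrightarrow> p = 0"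
  by (simp add: Zero_fract_def eq_fract)

lemma degree_diff_eq_if_Fract_eq:
  fixes p q p' q' :: "'a::field poly"
  assumes "p \<noteq> 0" "q \<noteq> 0" "p' \<noteq> 0" "q' \<noteq> 0" "Fract p q = Fract p' q'"
  shows "int (degree p) - int (degree q) = int (degree p') - int (degree q')"
proof -
  have "degree (p * q') = degree (p' * q)"
    using assms eq_fract(1) by metis
  with assms show ?thesis by (simp add: degree_mult_eq)
qed

text \<open>The value of \<open>rdegree 0\<close> is unspecified; \<open>rdegree_le\<close> treats \<open>0\<close> separately.\<close>

definition rdegree :: "'a::field ratf \<Rightarrow> int" where
  "rdegree f = (SOME d. \<exists>p q. p \<noteq> 0 \<and> q \<noteq> 0 \<and> f = Fract p q \<and> d = int (degree p) - int (degree q))"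

definition rdegree_le :: "int \<Rightarrow> 'a::field ratf \<Rightarrow> bool" where
  "rdegree_le k f \<longleftrightarrow> f = 0 \<or> rdegree f \<le> k"

abbreviation strictly_proper :: "'a::field ratf \<Rightarrow> bool" where
  "strictly_proper f \<equiv> rdegree_le (-1) f"

lemma rdegree_Fract:
  assumes "(p::'a::field poly) \<noteq> 0" "q \<noteq> 0"
  shows "rdegree (Fract p q) = int (degree p) - int (degree q)"
proof -
  have "\<exists>d p' q'. p' \<noteq> 0 \<and> q' \<noteq> 0 \<and> Fract p q = Fract p' q' \<and> d = int (degree p') - int (degree q')"
    using assms by blast
  from someI_ex[OF this] obtain p' q' where "p' \<noteq> 0" "q' \<noteq> 0" "Fract p q = Fract p' q'"
    "rdegree (Fract p q) = int (degree p') - int (degree q')"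
    unfolding rdegree_def by blast
  with degree_diff_eq_if_Fract_eq[OF assms this(1-3)] show ?thesis by simp
qed

lemma rdegree_to_fract: "p \<noteq> 0 \<Longrightarrow> rdegree (to_fract p) = int (degree p)"
  by (simp add: to_fract_def rdegree_Fract)

lemma rdegree_1 [simp]: "rdegree (1::'a::field ratf) = 0"
  using rdegree_to_fract[of "1::'a poly"] by simp

lemma rdegree_mult:
  assumes "(f::'a::field ratf) \<noteq> 0" "g \<noteq> 0"
  shows "rdegree (f * g) = rdegree f + rdegree g"
  using assms by (cases f rule: Fract_cases_nonzero; cases g rule: Fract_cases_nonzero)
    (simp_all add: rdegree_Fract degree_mult_eq)

lemma rdegree_inverse: "(f::'a::field ratf) \<noteq> 0 \<Longrightarrow> rdegree (inverse f) = - rdegree f"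
  by (cases f rule: Fract_cases_nonzero) (simp_all add: rdegree_Fract)

lemma rdegree_uminus: "rdegree (- (f::'a::field ratf)) = rdegree f"
  by (cases f rule: Fract_cases_nonzero) (simp_all add: rdegree_Fract)

lemma rdegree_add_le:
  assumes "(f::'a::field ratf) \<noteq> 0" "g \<noteq> 0" "f + g \<noteq> 0"
  shows "rdegree (f + g) \<le> max (rdegree f) (rdegree g)"
proof -
  obtain p q where pq: "f = Fract p q" "q \<noteq> 0" "p \<noteq> 0"
    using assms(1) by (cases f rule: Fract_cases_nonzero) auto
  obtain p' q' where pq': "g = Fract p' q'" "q' \<noteq> 0" "p' \<noteq> 0"
    using assms(2) by (cases g rule: Fract_cases_nonzero) auto
  have sum: "f + g = Fract (p * q' + p' * q) (q * q')" using pq pq' by simp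
  have "p * q' + p' * q \<noteq> 0" using sum assms(3) pq pq' Fract_eq_0_iff[of "q * q'"] by auto
  moreover have "degree (p * q' + p' * q) \<le> max (degree (p * q')) (degree (p' * q))"
    by (rule degree_add_le_max)
  ultimately show ?thesis using pq pq' sum by (simp add: rdegree_Fract degree_mult_eq)
qed

lemma rdegree_le_0 [simp]: "rdegree_le k 0"
  by (simp add: rdegree_le_def)

lemma rdegree_le_mono: "rdegree_le k f \<Longrightarrow> k \<le> k' \<Longrightarrow> rdegree_le k' f"
  by (auto simp: rdegree_le_def)

lemma rdegree_le_mult: "rdegree_le a f \<Longrightarrow> rdegree_le b g \<Longrightarrow> rdegree_le (a + b) (f * g)"
  by (cases "f = 0"; cases "g = 0") (auto simp: rdegree_le_def rdegree_mult)

lemma rdegree_le_uminus [simp]: "rdegree_le k (- f) \<longleftrightarrow> rdegree_le k f"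
  by (auto simp: rdegree_le_def rdegree_uminus)

lemma rdegree_le_add: "rdegree_le k f \<Longrightarrow> rdegree_le k g \<Longrightarrow> rdegree_le k (f + g)"
  using rdegree_add_le[of f g]
  by (cases "f = 0"; cases "g = 0"; cases "f + g = 0") (auto simp: rdegree_le_def)

lemma rdegree_le_diff: "rdegree_le k f \<Longrightarrow> rdegree_le k g \<Longrightarrow> rdegree_le k (f - g)"
  using rdegree_le_add[of k f "- g"] by simp

lemma rdegree_le_sum: "(\<And>i. i \<in> S \<Longrightarrow> rdegree_le k (f i)) \<Longrightarrow> rdegree_le k (sum f S)"
  by (induction S rule: infinite_finite_induct) (auto intro: rdegree_le_add)

lemma rdegree_le_1: "rdegree_le 0 (1::'a::field ratf)"
  by (simp add: rdegree_le_def)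

lemma rdegree_le_prod: "(\<And>i. i \<in> S \<Longrightarrow> rdegree_le 0 (f i)) \<Longrightarrow> rdegree_le 0 (prod f S)"
proof (induction S rule: infinite_finite_induct)
  case (insert x F)
  then show ?case using rdegree_le_mult[of 0 "f x" 0 "prod f F"] by simp
qed (simp_all add: rdegree_le_1)

lemma proper_iff_rdegree_le: "proper f \<longleftrightarrow> rdegree_le 0 f"
proof (cases f rule: Fract_cases_nonzero)
  case (Fract a b)
  have "rdegree (Fract p q) \<le> 0 \<longleftrightarrow> degree p \<le> degree q" if "p \<noteq> 0" "q \<noteq> 0" for p q
    using that by (simp add: rdegree_Fract)
  with Fract show ?thesis
    unfolding proper_def rdegree_le_def by (metis Fract_eq_0_iff)
qed (simp add: proper_def)

lemma strictly_proper_to_fract: "strictly_proper (to_fract p) \<Longrightarrow> p = 0"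
  by (cases "p = 0") (auto simp: rdegree_le_def rdegree_to_fract)

section \<open>Polynomial part\<close>

lemma strictly_proper_Fract_minus_div:
  assumes "(q::'a::field poly) \<noteq> 0"
  shows "strictly_proper (Fract p q - to_fract (p div q))"
proof -
  have eq: "Fract p q - to_fract (p div q) = Fract (p mod q) q"
    using assms by (simp add: to_fract_def minus_div_mult_eq_mod)
  show ?thesis
  proof (cases "p mod q = 0")
    case False
    with degree_mod_less'[OF assms False] assms show ?thesis
      by (simp add: eq rdegree_le_def rdegree_Fract)
  qed (use Fract_eq_0_iff[OF assms, of 0] in \<open>simp add: eq\<close>)
qed

lemma pi_plus_unique:
  assumes "strictly_proper (f - to_fract a)"
  shows "pi_plus f = to_fract a"
proof -
  let ?P = "\<lambda>r. \<exists>p q. q \<noteq> 0 \<and> f = Fract p q \<and> r = p div q"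
  have unique: "r = a" if "?P r" for r
  proof -
    from that obtain p q where pq: "q \<noteq> 0" "f = Fract p q" "r = p div q" by blast
    have "strictly_proper (f - to_fract r)"
      using strictly_proper_Fract_minus_div[OF pq(1), of p] unfolding pq(2,3) .
    then have "strictly_proper ((f - to_fract a) - (f - to_fract r))"
      by (rule rdegree_le_diff[OF assms])
    moreover have "(f - to_fract a) - (f - to_fract r) = to_fract (r - a)" by simp
    ultimately have "strictly_proper (to_fract (r - a))" by (simp only:)
    then have "r - a = 0" by (rule strictly_proper_to_fract)
    then show ?thesis by simp
  qed
  obtain p q where "q \<noteq> 0" "f = Fract p q" by (cases f) auto
  then have "\<exists>r. ?P r" by blast
  from unique[OF someI_ex[OF this]] show ?thesis
    unfolding pi_plus_def emb_eq_to_fract by simp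
qed

lemma strictly_proper_minus_pi_plus: "strictly_proper (f - pi_plus f)"
proof -
  obtain p q where "q \<noteq> 0" "f = Fract p q" by (cases f) auto
  with strictly_proper_Fract_minus_div pi_plus_unique show ?thesis by metis
qed

lemma pi_plus_add: "pi_plus (f + g) = pi_plus f + pi_plus g"
proof -
  obtain a b where "pi_plus f = to_fract a" "pi_plus g = to_fract b"
    unfolding pi_plus_def emb_eq_to_fract by blast
  moreover have "strictly_proper ((f + g) - (pi_plus f + pi_plus g))"
    using rdegree_le_add[OF strictly_proper_minus_pi_plus strictly_proper_minus_pi_plus, of f g]
    by (simp add: algebra_simps)
  ultimately show ?thesis using pi_plus_unique[of "f + g" "a + b"] by simp
qed

lemma pi_plus_eq_0_iff: "pi_plus f = 0 \<longleftrightarrow> strictly_proper f"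
  using strictly_proper_minus_pi_plus[of f] pi_plus_unique[of f 0] by auto

lemma pi_plus_diff: "pi_plus (f - g) = pi_plus f - pi_plus g"
proof -
  have "pi_plus f = pi_plus (f - g) + pi_plus g" using pi_plus_add[of "f - g" g] by simp
  then show ?thesis by simp
qed

section \<open>Value at infinity\<close>

definition ratf_const :: "'a::field \<Rightarrow> 'a ratf" where
  "ratf_const c = to_fract [:c:]"

lemma ratf_const_0 [simp]: "ratf_const 0 = 0"
  and ratf_const_1 [simp]: "ratf_const 1 = 1"
  and ratf_const_add: "ratf_const (a + b) = ratf_const a + ratf_const b"
  and ratf_const_diff: "ratf_const (a - b) = ratf_const a - ratf_const b"
  and ratf_const_mult: "ratf_const (a * b) = ratf_const a * ratf_const b"
  by (simp_all add: ratf_const_def one_pCons[symmetric] mult.commute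
      flip: to_fract_add to_fract_diff to_fract_mult)

lemma proper_ratf_const: "rdegree_le 0 (ratf_const c)"
  by (cases "c = 0") (auto simp: ratf_const_def rdegree_le_def rdegree_to_fract)

lemma strictly_proper_ratf_const: "strictly_proper (ratf_const c) \<Longrightarrow> c = 0"
  unfolding ratf_const_def using strictly_proper_to_fract by fastforce

definition value_at_inf :: "'a::field ratf \<Rightarrow> 'a" where
  "value_at_inf f = (SOME c. strictly_proper (f - ratf_const c))"

lemma proper_imp_ex_value_at_inf:
  assumes "rdegree_le 0 (f::'a::field ratf)"
  shows "\<exists>c. strictly_proper (f - ratf_const c)"
proof (cases f rule: Fract_cases_nonzero)
  case (Fract p q)
  have "degree p \<le> degree q"
    using assms Fract by (simp add: rdegree_le_def rdegree_Fract Fract_eq_0_iff)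
  define c where "c = coeff p (degree q) / lead_coeff q"
  define r where "r = p - smult c q"
  have f_minus_c: "f - ratf_const c = Fract r q"
    using Fract by (simp add: ratf_const_def to_fract_def r_def)
  have "degree r \<le> degree q"
    unfolding r_def using \<open>degree p \<le> degree q\<close>
    by (meson degree_diff_le degree_smult_le le_trans)
  moreover have "coeff r (degree q) = 0"
    using Fract by (simp add: r_def c_def)
  ultimately have "r = 0 \<or> degree r < degree q"
    by (metis leading_coeff_0_iff order_le_neq_trans)
  then have "strictly_proper (Fract r q)"
    using Fract by (cases "r = 0") (auto simp: rdegree_le_def rdegree_Fract Fract_eq_0_iff)
  then show ?thesis using f_minus_c by metis
qed (auto intro: exI[of _ 0])

lemma strictly_proper_minus_value_at_inf:
  "rdegree_le 0 f \<Longrightarrow> strictly_proper (f - ratf_const (value_at_inf f))"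
  unfolding value_at_inf_def using proper_imp_ex_value_at_inf someI_ex by metis

lemma value_at_inf_unique:
  assumes "strictly_proper (f - ratf_const c)"
  shows "value_at_inf f = c"
proof -
  have "rdegree_le 0 (f - ratf_const c + ratf_const c)"
    by (rule rdegree_le_add[OF rdegree_le_mono[OF assms] proper_ratf_const]) simp
  then have "strictly_proper (f - ratf_const (value_at_inf f))"
    by (simp add: strictly_proper_minus_value_at_inf)
  then have "strictly_proper ((f - ratf_const c) - (f - ratf_const (value_at_inf f)))"
    using rdegree_le_diff[OF assms] by blast
  then have "strictly_proper (ratf_const (value_at_inf f - c))"
    by (simp add: ratf_const_diff)
  then show ?thesis using strictly_proper_ratf_const by force
qed

lemma value_at_inf_ratf_const [simp]: "value_at_inf (ratf_const c) = c"
  by (rule value_at_inf_unique) simp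

lemma value_at_inf_add:
  "rdegree_le 0 f \<Longrightarrow> rdegree_le 0 g \<Longrightarrow> value_at_inf (f + g) = value_at_inf f + value_at_inf g"
  by (rule value_at_inf_unique)
    (use rdegree_le_add[OF strictly_proper_minus_value_at_inf strictly_proper_minus_value_at_inf, of f g]
      in \<open>simp add: ratf_const_add algebra_simps\<close>)

lemma value_at_inf_mult:
  assumes f: "rdegree_le 0 f" and g: "rdegree_le 0 g"
  shows "value_at_inf (f * g) = value_at_inf f * value_at_inf g"
proof (rule value_at_inf_unique)
  let ?a = "ratf_const (value_at_inf f)" and ?b = "ratf_const (value_at_inf g)"
  have "f * g - ratf_const (value_at_inf f * value_at_inf g) = (f - ?a) * g + ?a * (g - ?b)"
    by (simp add: ratf_const_mult algebra_simps)
  moreover have "strictly_proper ((f - ?a) * g)"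
    using rdegree_le_mult[OF strictly_proper_minus_value_at_inf[OF f] g] by simp
  moreover have "strictly_proper (?a * (g - ?b))"
    using rdegree_le_mult[OF proper_ratf_const strictly_proper_minus_value_at_inf[OF g]] by simp
  ultimately show "strictly_proper (f * g - ratf_const (value_at_inf f * value_at_inf g))"
    using rdegree_le_add by metis
qed

lemma value_at_inf_0 [simp]: "value_at_inf 0 = 0"
  and value_at_inf_1 [simp]: "value_at_inf 1 = 1"
  using value_at_inf_ratf_const[of 0] value_at_inf_ratf_const[of 1] by simp_all

lemma value_at_inf_uminus: "rdegree_le 0 f \<Longrightarrow> value_at_inf (- f) = - value_at_inf f"
  using value_at_inf_add[of f "- f"] by (simp add: add_eq_0_iff)

lemma value_at_inf_sum:
  "(\<And>i. i \<in> S \<Longrightarrow> rdegree_le 0 (f i)) \<Longrightarrow> value_at_inf (sum f S) = (\<Sum>i\<in>S. value_at_inf (f i))"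
  by (induction S rule: infinite_finite_induct)
    (auto simp: value_at_inf_add rdegree_le_sum)

lemma value_at_inf_prod:
  "(\<And>i. i \<in> S \<Longrightarrow> rdegree_le 0 (f i)) \<Longrightarrow> value_at_inf (prod f S) = (\<Prod>i\<in>S. value_at_inf (f i))"
  by (induction S rule: infinite_finite_induct)
    (auto simp: value_at_inf_mult rdegree_le_prod)

lemma value_at_inf_eq_0_imp_strictly_proper:
  "rdegree_le 0 f \<Longrightarrow> value_at_inf f = 0 \<Longrightarrow> strictly_proper f"
  using strictly_proper_minus_value_at_inf[of f] by simp

lemma value_at_inf_nonzero:
  assumes "rdegree_le 0 f" "value_at_inf f \<noteq> 0"
  shows "f \<noteq> 0" "rdegree_le 0 (inverse f)"
proof -
  have "strictly_proper (f - ratf_const (value_at_inf f))"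
    using strictly_proper_minus_value_at_inf[OF assms(1)] .
  moreover have "\<not> strictly_proper f"
    using value_at_inf_unique[of f 0] assms(2) by auto
  moreover have "f = (f - ratf_const (value_at_inf f)) + ratf_const (value_at_inf f)"
    by simp
  ultimately have "\<not> strictly_proper (ratf_const (value_at_inf f))"
    using rdegree_le_add by metis
  then show "f \<noteq> 0" "rdegree_le 0 (inverse f)"
    using assms(1) \<open>\<not> strictly_proper f\<close> by (auto simp: rdegree_le_def rdegree_inverse)
qed

definition s_pow :: "int \<Rightarrow> 'a::field ratf" where
  "s_pow k = to_fract [:0, 1:] powi k"

lemma s_pow_nonzero: "s_pow k \<noteq> 0"
  by (simp add: s_pow_def)

lemma s_pow_0 [simp]: "s_pow 0 = 1"
  by (simp add: s_pow_def)

lemma s_pow_add: "s_pow (a + b) = s_pow a * s_pow b"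
  by (simp add: s_pow_def power_int_add)

lemma rdegree_s_pow: "rdegree (s_pow k :: 'a::field ratf) = k"
proof -
  have pow: "rdegree ((to_fract [:0, 1:] :: 'a ratf) ^ n) = int n" for n
  proof -
    have "(to_fract [:0, 1:] :: 'a ratf) ^ n = to_fract ([:0, 1:] ^ n)"
      by (induction n) (simp_all flip: to_fract_mult)
    then show ?thesis by (simp add: rdegree_to_fract degree_power_eq)
  qed
  show ?thesis
  proof (cases "k \<ge> 0")
    case True
    then show ?thesis using pow[of "nat k"] by (simp add: s_pow_def power_int_def)
  next
    case False
    then show ?thesis
      using pow[of "nat (- k)"] rdegree_inverse[of "(to_fract [:0, 1:] :: 'a ratf) ^ nat (- k)"]
      by (simp add: s_pow_def power_int_def power_inverse)
  qed
qed

lemma rdegree_le_s_pow: "rdegree_le k (s_pow k)"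
  by (simp add: rdegree_le_def rdegree_s_pow)

lemma rdegree_le_mult_s_pow: "rdegree_le k f \<Longrightarrow> rdegree_le (k + j) (f * s_pow j)"
  using rdegree_le_mult[OF _ rdegree_le_s_pow] by blast

lemma prod_s_pow: "(\<Prod>j\<in>S. s_pow (f j)) = s_pow (\<Sum>j\<in>S. f j)"
  by (induction S rule: infinite_finite_induct) (auto simp: s_pow_add)

definition strictly_proper_vec :: "'a::field ratf ^'n \<Rightarrow> bool" where
  "strictly_proper_vec x \<longleftrightarrow> (\<forall>i. strictly_proper (x $ i))"

lemma proper_vecs_iff: "x \<in> proper_vecs \<longleftrightarrow> (\<forall>i. rdegree_le 0 (x $ i))"
  by (simp add: proper_vecs_def proper_iff_rdegree_le)

lemma proper_mat_iff: "proper_mat A \<longleftrightarrow> (\<forall>i j. rdegree_le 0 (A $ i $ j))"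
  by (simp add: proper_mat_def proper_iff_rdegree_le)

lemma rdegree_le_matrix_vector_mult:
  assumes "\<And>i j. rdegree_le a (A $ i $ j)" "\<And>j. rdegree_le b (x $ j)"
  shows "rdegree_le (a + b) ((A *v x) $ i)"
  unfolding matrix_vector_mult_def using assms by (auto intro!: rdegree_le_sum rdegree_le_mult)

lemma rdegree_le_matrix_matrix_mult:
  assumes "\<And>i j. rdegree_le a (A $ i $ j)" "\<And>i j. rdegree_le b (B $ i $ j)"
  shows "rdegree_le (a + b) ((A ** B) $ i $ j)"
  unfolding matrix_matrix_mult_def using assms by (auto intro!: rdegree_le_sum rdegree_le_mult)

lemma proper_vecs_matrix_vector_mult:
  "proper_mat A \<Longrightarrow> x \<in> proper_vecs \<Longrightarrow> A *v x \<in> proper_vecs"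
  using rdegree_le_matrix_vector_mult[of 0 A 0 x] by (auto simp: proper_mat_iff proper_vecs_iff)

lemma strictly_proper_vec_matrix_vector_mult:
  "proper_mat A \<Longrightarrow> strictly_proper_vec x \<Longrightarrow> strictly_proper_vec (A *v x)"
  using rdegree_le_matrix_vector_mult[of 0 A "-1" x]
  by (auto simp: proper_mat_iff strictly_proper_vec_def)

lemma proper_mat_mult: "proper_mat A \<Longrightarrow> proper_mat B \<Longrightarrow> proper_mat (A ** B)"
  using rdegree_le_matrix_matrix_mult[of 0 A 0 B] by (auto simp: proper_mat_iff)

lemma proper_vecs_add: "x \<in> proper_vecs \<Longrightarrow> y \<in> proper_vecs \<Longrightarrow> x + y \<in> proper_vecs"
  by (auto simp: proper_vecs_iff intro: rdegree_le_add)

lemma proper_vecs_sum: "(\<And>i. i \<in> S \<Longrightarrow> f i \<in> proper_vecs) \<Longrightarrow> sum f S \<in> proper_vecs"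
  by (induction S rule: infinite_finite_induct) (auto simp: proper_vecs_iff intro: rdegree_le_add)

lemma proper_vecs_smult: "rdegree_le 0 c \<Longrightarrow> x \<in> proper_vecs \<Longrightarrow> c *s x \<in> proper_vecs"
  using rdegree_le_mult[of 0 c 0] by (auto simp: proper_vecs_iff)

lemma proper_vecs_axis: "rdegree_le 0 c \<Longrightarrow> axis i c \<in> proper_vecs"
  by (simp add: proper_vecs_iff axis_def)

lemma strictly_proper_vec_axis: "strictly_proper c \<Longrightarrow> strictly_proper_vec (axis i c)"
  by (simp add: strictly_proper_vec_def axis_def)

lemma strictly_proper_vec_smult:
  "rdegree_le 0 c \<Longrightarrow> strictly_proper_vec x \<Longrightarrow> strictly_proper_vec (c *s x)"
  using rdegree_le_mult[of 0 c "-1"] by (auto simp: strictly_proper_vec_def)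

lemma strictly_proper_vec_uminus [simp]: "strictly_proper_vec (- x) \<longleftrightarrow> strictly_proper_vec x"
  by (simp add: strictly_proper_vec_def)

lemma pi_plus_vec_add: "pi_plus_vec (v + w) = pi_plus_vec v + pi_plus_vec w"
  by (simp add: pi_plus_vec_def vec_eq_iff pi_plus_add)

lemma pi_plus_vec_diff: "pi_plus_vec (v - w) = pi_plus_vec v - pi_plus_vec w"
  by (simp add: pi_plus_vec_def vec_eq_iff pi_plus_diff)

lemma pi_plus_vec_eq_0_iff: "pi_plus_vec v = 0 \<longleftrightarrow> strictly_proper_vec v"
  by (simp add: pi_plus_vec_def vec_eq_iff pi_plus_eq_0_iff strictly_proper_vec_def)

lemma strictly_proper_vec_minus_pi_plus_vec: "strictly_proper_vec (v - pi_plus_vec v)"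
  by (simp add: pi_plus_vec_def strictly_proper_vec_def strictly_proper_minus_pi_plus)

lemma matrix_vector_mult_smult: "(A::'a::comm_ring_1^'n^'m) *v (c *s x) = c *s (A *v x)"
  by (simp add: vec_eq_iff matrix_vector_mult_def sum_distrib_left algebra_simps)

lemma matrix_vector_mult_uminus: "(A::'a::ring_1^'n^'m) *v (- x) = - (A *v x)"
  using matrix_vector_mult_diff_distrib[of A 0 x] by simp

lemma matrix_vector_mult_axis: "((A::'a::comm_ring_1^'n^'m) *v axis j c) $ k = A $ k $ j * c"
  by (simp add: matrix_vector_mult_def axis_def if_distrib cong: if_cong)

lemma matrix_inv_inverse:
  assumes "invertible (A::'a::semiring_1^'n^'n)"
  shows matrix_inv_right: "A ** matrix_inv A = mat 1"
    and matrix_inv_left: "matrix_inv A ** A = mat 1"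
proof -
  have "\<exists>A'. A ** A' = mat 1 \<and> A' ** A = mat 1"
    using assms invertible_def by blast
  from someI_ex[OF this] show "A ** matrix_inv A = mat 1" "matrix_inv A ** A = mat 1"
    unfolding matrix_inv_def by auto
qed

lemma matrix_inv_unique:
  assumes "(A::'a::field^'n^'n) ** X = mat 1"
  shows "invertible A" "matrix_inv A = X"
proof -
  show inv: "invertible A"
    using assms matrix_left_right_inverse invertible_def by blast
  have "matrix_inv A = (matrix_inv A ** A) ** X"
    using assms by (simp add: matrix_mul_assoc[symmetric])
  then show "matrix_inv A = X" using matrix_inv_left[OF inv] by simp
qed

lemma matrix_inv_cancel_left: "invertible (A::'a::field^'n^'n) \<Longrightarrow> matrix_inv A *v (A *v x) = x"
  by (simp add: matrix_vector_mul_assoc matrix_inv_left)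

lemma matrix_inv_cancel_right: "invertible (A::'a::field^'n^'n) \<Longrightarrow> A *v (matrix_inv A *v x) = x"
  by (simp add: matrix_vector_mul_assoc matrix_inv_right)

lemma to_fract_of_int: "to_fract (of_int k) = of_int k"
proof -
  have "to_fract (of_nat n) = of_nat n" for n
    by (simp add: to_fract_def Fract_of_nat_eq)
  then show ?thesis by (cases k rule: int_cases) simp_all
qed

lemma to_fract_prod: "to_fract (prod f S) = (\<Prod>i\<in>S. to_fract (f i))"
  by (induction S rule: infinite_finite_induct) simp_all

lemma det_emb_mat: "det (emb_mat L) = to_fract (det L)"
  by (simp add: det_def emb_mat_def emb_eq_to_fract to_fract_of_int to_fract_prod)

lemma invertible_emb_mat: "det L \<noteq> 0 \<Longrightarrow> invertible (emb_mat L)"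
  by (simp add: invertible_det_nz det_emb_mat)

lemma rho_e_eq_rho: "rho_e = rho"
  by (intro ext) (simp add: rho_e_def rho_def)

lemma rho_add: "rho L (x + y) = rho L x + rho L y"
  by (simp add: rho_def matrix_vector_right_distrib pi_plus_vec_add)

lemma rho_diff: "rho L (x - y) = rho L x - rho L y"
  by (simp add: rho_def matrix_vector_mult_diff_distrib pi_plus_vec_diff)

lemma rho_0 [simp]: "rho L 0 = 0"
  using rho_diff[of L 0 0] by simp

context
  fixes L :: "'a::field poly ^'n^'n"
  assumes det_L: "det L \<noteq> 0"
begin

lemma rho_eq_0_iff: "rho L x = 0 \<longleftrightarrow> strictly_proper_vec (matrix_inv (emb_mat L) *v x)"
  using matrix_inv_cancel_left[OF invertible_emb_mat[OF det_L]]
  by (metis pi_plus_vec_eq_0_iff matrix_vector_mult_0_right rho_def)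

lemma rho_eq_iff: "rho L x = rho L y \<longleftrightarrow> strictly_proper_vec (matrix_inv (emb_mat L) *v (x - y))"
  using rho_eq_0_iff[of "x - y"] rho_diff[of L x y] by auto

lemma rho_minus_self:
  "rho L x - x = - (emb_mat L *v (matrix_inv (emb_mat L) *v x - pi_plus_vec (matrix_inv (emb_mat L) *v x)))"
  using matrix_inv_cancel_right[OF invertible_emb_mat[OF det_L]]
  by (simp add: rho_def matrix_vector_mult_diff_distrib)

lemma act_rho:
  assumes "x \<in> proper_vecs" "rdegree_le 0 q"
  shows "act L q (rho L x) = rho L (q *s x)"
proof -
  let ?Li = "matrix_inv (emb_mat L)"
  let ?P = "\<lambda>y. y \<in> proper_vecs \<and> rho L y = rho L x"
  have "?P x" using assms(1) by simp
  then have "?P (SOME y. ?P y)" by (rule someI)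
  then obtain y where y: "(SOME y. ?P y) = y" "rho L y = rho L x" by blast
  then have "strictly_proper_vec (?Li *v (y - x))" using rho_eq_iff by blast
  then have "strictly_proper_vec (q *s (?Li *v (y - x)))"
    by (rule strictly_proper_vec_smult[OF assms(2)])
  moreover have "?Li *v (q *s y - q *s x) = q *s (?Li *v (y - x))"
    by (simp only: vector_ssub_ldistrib[symmetric] matrix_vector_mult_smult)
  ultimately have "rho L (q *s y) = rho L (q *s x)"
    unfolding rho_eq_iff by (simp only:)
  then show ?thesis using y by (simp add: act_def)
qed

end

section \<open>Intertwining matrices and module homomorphisms\<close>

text \<open>Only \<open>\<Theta>\<^sub>1\<close> has to be proper: \<open>\<Theta>\<close> maps \<open>L w\<close> to \<open>L\<^sub>1 (\<Theta>\<^sub>1 w)\<close>, and \<open>\<Theta>\<^sub>1\<close> keeps \<open>w\<close> strictly proper.\<close>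

lemma rho_intertwining_mult_rho:
  fixes L :: "'a::field poly ^'n^'n" and L1 :: "'a poly ^'m^'m"
  assumes det_L: "det L \<noteq> 0" and det_L1: "det L1 \<noteq> 0"
    and T1: "proper_mat T1" and intertwining: "T ** emb_mat L = emb_mat L1 ** T1"
  shows "rho L1 (T *v rho L x) = rho L1 (T *v x)"
proof -
  define w where "w = matrix_inv (emb_mat L) *v x - pi_plus_vec (matrix_inv (emb_mat L) *v x)"
  have "T *v rho L x - T *v x = T *v (rho L x - x)"
    by (simp only: matrix_vector_mult_diff_distrib)
  also have "\<dots> = - (emb_mat L1 *v (T1 *v w))"
    unfolding rho_minus_self[OF det_L] w_def
    by (simp only: matrix_vector_mult_uminus matrix_vector_mul_assoc intertwining)
  finally have "matrix_inv (emb_mat L1) *v (T *v rho L x - T *v x) = - (T1 *v w)"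
    by (simp add: matrix_vector_mult_uminus matrix_inv_cancel_left[OF invertible_emb_mat[OF det_L1]])
  moreover have "strictly_proper_vec (T1 *v w)"
    unfolding w_def by (rule strictly_proper_vec_matrix_vector_mult[OF T1 strictly_proper_vec_minus_pi_plus_vec])
  ultimately show ?thesis
    using rho_eq_iff[OF det_L1] by simp
qed

lemma Kinf_module_hom_if_intertwining:
  fixes L :: "'a::field poly ^'n^'n" and L1 :: "'a poly ^'m^'m"
  assumes det_L: "det L \<noteq> 0" and det_L1: "det L1 \<noteq> 0"
    and T: "proper_mat T" and T1: "proper_mat T1"
    and intertwining: "T ** emb_mat L = emb_mat L1 ** T1"
    and \<phi>: "\<forall>xb\<in>U L. \<phi> xb = rho_e L1 (T *v xb)"
  shows "Kinf_module_hom L L1 \<phi>"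
proof -
  have \<phi>_rho: "\<phi> (rho L x) = rho L1 (T *v x)" if "x \<in> proper_vecs" for x
    using that \<phi> rho_intertwining_mult_rho[OF det_L det_L1 T1 intertwining]
    by (auto simp: U_def rho_e_eq_rho)
  show ?thesis unfolding Kinf_module_hom_def
  proof (intro conjI ballI allI impI)
    fix xb assume "xb \<in> U L"
    then obtain x where "x \<in> proper_vecs" "xb = rho L x" by (auto simp: U_def)
    then show "\<phi> xb \<in> U L1"
      using \<phi>_rho proper_vecs_matrix_vector_mult[OF T] by (auto simp: U_def)
  next
    fix xb yb assume "xb \<in> U L" "yb \<in> U L"
    then obtain x y where x: "x \<in> proper_vecs" "xb = rho L x" and y: "y \<in> proper_vecs" "yb = rho L y"
      by (auto simp: U_def)
    have "\<phi> (xb + yb) = rho L1 (T *v (x + y))"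
      using \<phi>_rho[OF proper_vecs_add[OF x(1) y(1)]] x y by (simp add: rho_add)
    then show "\<phi> (xb + yb) = \<phi> xb + \<phi> yb"
      using \<phi>_rho x y by (simp add: matrix_vector_right_distrib rho_add)
  next
    fix q :: "'a ratf" and xb assume "proper q \<and> xb \<in> U L"
    then obtain x where x: "x \<in> proper_vecs" "xb = rho L x" and q: "rdegree_le 0 q"
      by (auto simp: U_def proper_iff_rdegree_le)
    have "\<phi> (act L q xb) = rho L1 (q *s (T *v x))"
      using act_rho[OF det_L x(1) q] \<phi>_rho[OF proper_vecs_smult[OF q x(1)]] x(2)
      by (simp add: matrix_vector_mult_smult)
    also have "\<dots> = act L1 q (\<phi> xb)"
      using act_rho[OF det_L1 proper_vecs_matrix_vector_mult[OF T x(1)] q] \<phi>_rho[OF x(1)] x(2)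
      by simp
    finally show "\<phi> (act L q xb) = act L1 q (\<phi> xb)" .
  qed
qed

lemma Kinf_module_hom_0:
  assumes "Kinf_module_hom L L1 \<phi>"
  shows "\<phi> 0 = 0"
proof -
  have "0 \<in> U L"
    unfolding U_def by (rule image_eqI[of _ _ 0]) (simp_all add: proper_vecs_iff)
  then have "\<phi> (0 + 0) = \<phi> 0 + \<phi> 0"
    using assms unfolding Kinf_module_hom_def by blast
  then show ?thesis by simp
qed

lemma Kinf_module_hom_rho_lincomb:
  fixes L :: "'a::field poly ^'n^'n" and L1 :: "'a poly ^'m^'m"
  assumes det_L: "det L \<noteq> 0" and det_L1: "det L1 \<noteq> 0"
    and hom: "Kinf_module_hom L L1 \<phi>"
    and v: "\<And>i. v i \<in> proper_vecs" and w: "\<And>i. w i \<in> proper_vecs"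
    and \<phi>_v: "\<And>i. \<phi> (rho L (v i)) = rho L1 (w i)"
    and c: "\<And>i. rdegree_le 0 (c i)"
  shows "\<phi> (rho L (\<Sum>i\<in>S. c i *s v i)) = rho L1 (\<Sum>i\<in>S. c i *s w i)"
proof (induction S rule: infinite_finite_induct)
  case (insert i S)
  have in_U: "rho L x \<in> U L" if "x \<in> proper_vecs" for x
    using that by (auto simp: U_def)
  have add: "\<phi> (xb + yb) = \<phi> xb + \<phi> yb" if "xb \<in> U L" "yb \<in> U L" for xb yb
    using hom that by (simp add: Kinf_module_hom_def)
  have "\<phi> (rho L (c i *s v i)) = \<phi> (act L (c i) (rho L (v i)))"
    using act_rho[OF det_L v c] by simp
  also have "\<dots> = act L1 (c i) (rho L1 (w i))"
    using hom in_U[OF v] c \<phi>_v by (simp add: Kinf_module_hom_def proper_iff_rdegree_le)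
  also have "\<dots> = rho L1 (c i *s w i)"
    using act_rho[OF det_L1 w c] .
  finally have "\<phi> (rho L (c i *s v i)) = rho L1 (c i *s w i)" .
  moreover have "(\<Sum>i\<in>S. c i *s v i) \<in> proper_vecs"
    by (intro proper_vecs_sum proper_vecs_smult c v)
  moreover note add[OF in_U[OF proper_vecs_smult[OF c v]] in_U[OF this]]
  ultimately show ?case
    using insert by (simp add: rho_add)
qed (simp_all add: Kinf_module_hom_0[OF hom])

lemma Kinf_module_hom_matrix:
  fixes L :: "'a::field poly ^'n^'n" and L1 :: "'a poly ^'m^'m"
  assumes det_L: "det L \<noteq> 0" and det_L1: "det L1 \<noteq> 0"
    and hom: "Kinf_module_hom L L1 \<phi>"
  obtains T :: "'a ratf ^'n^'m"
  where "proper_mat T" "\<And>x. x \<in> proper_vecs \<Longrightarrow> \<phi> (rho L x) = rho L1 (T *v x)"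
proof -
  have e: "axis i 1 \<in> proper_vecs" for i :: 'n
    by (rule proper_vecs_axis[OF rdegree_le_1])
  have "\<forall>i. \<exists>t. t \<in> proper_vecs \<and> \<phi> (rho L (axis i 1)) = rho L1 t"
  proof
    fix i
    have "\<phi> (rho L (axis i 1)) \<in> U L1"
      using hom e[of i] by (auto simp: Kinf_module_hom_def U_def)
    then show "\<exists>t. t \<in> proper_vecs \<and> \<phi> (rho L (axis i 1)) = rho L1 t"
      by (auto simp: U_def)
  qed
  from choice[OF this] obtain t
    where "\<forall>i. t i \<in> proper_vecs \<and> \<phi> (rho L (axis i 1)) = rho L1 (t i)"
    by blast
  then have t: "\<And>i. t i \<in> proper_vecs" "\<And>i. \<phi> (rho L (axis i 1)) = rho L1 (t i)"
    by simp_all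
  define T :: "'a ratf ^'n^'m" where "T = (\<chi> k i. t i $ k)"
  have "proper_mat T"
    using t(1) by (simp add: T_def proper_mat_iff proper_vecs_iff)
  moreover have "\<phi> (rho L x) = rho L1 (T *v x)" if "x \<in> proper_vecs" for x
  proof -
    have "T *v x = (\<Sum>i\<in>UNIV. x $ i *s t i)"
      by (simp add: matrix_mult_sum T_def column_def)
    then show ?thesis
      using Kinf_module_hom_rho_lincomb[where v = "\<lambda>i. axis i 1" and c = "\<lambda>i. x $ i" and S = UNIV,
          OF det_L det_L1 hom e t] that
      by (simp add: basis_expansion proper_vecs_iff)
  qed
  ultimately show ?thesis using that by blast
qed

section \<open>Biproper matrices\<close>

definition diag_mat :: "('n \<Rightarrow> 'a::comm_ring_1) \<Rightarrow> 'a^'n^'n" where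
  "diag_mat f = (\<chi> i k. if i = k then f i else 0)"

lemma matrix_mult_diag_mat: "(A ** diag_mat f) $ r $ k = A $ r $ k * f k"
  by (simp add: matrix_matrix_mult_def diag_mat_def if_distrib cong: if_cong)

lemma diag_mat_vector_mult: "(diag_mat f *v v) $ r = f r * v $ r"
proof -
  have "(diag_mat f *v v) $ r = (\<Sum>k\<in>UNIV. if r = k then f r * v $ k else 0)"
    unfolding matrix_vector_mult_def diag_mat_def vec_lambda_beta by (intro sum.cong) auto
  then show ?thesis by simp
qed

lemma diag_mat_mult_diag_mat: "diag_mat f ** diag_mat g = diag_mat (\<lambda>i. f i * g i)"
  by (simp add: vec_eq_iff matrix_mult_diag_mat) (simp add: diag_mat_def)

lemma diag_mat_1: "diag_mat (\<lambda>i. 1) = mat 1"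
  by (simp add: diag_mat_def mat_def)

lemma diag_mat_vector_mult_axis: "diag_mat f *v axis i c = axis i (f i * c)"
  by (simp add: vec_eq_iff diag_mat_vector_mult axis_def)

lemma det_diag_mat: "det (diag_mat f) = (\<Prod>i\<in>UNIV. f i)"
  by (subst det_diagonal) (auto simp: diag_mat_def)

lemma proper_mat_diag_mat: "(\<And>i. rdegree_le 0 (f i)) \<Longrightarrow> proper_mat (diag_mat f)"
  by (simp add: proper_mat_iff diag_mat_def)

lemma proper_mat_mat_1: "proper_mat (mat 1 :: 'a::field ratf^'n^'n)"
  by (simp add: proper_mat_iff mat_def rdegree_le_1)

definition value_at_inf_mat :: "'a::field ratf^'n^'m \<Rightarrow> 'a^'n^'m" where
  "value_at_inf_mat A = (\<chi> i j. value_at_inf (A $ i $ j))"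

lemma rdegree_le_of_int_sign: "rdegree_le 0 (of_int (sign p) :: 'a::field ratf)"
  by (cases p rule: sign_cases) (simp_all add: rdegree_le_1)

lemma value_at_inf_of_int_sign: "value_at_inf (of_int (sign p) :: 'a::field ratf) = of_int (sign p)"
  by (cases p rule: sign_cases) (simp_all add: value_at_inf_uminus rdegree_le_1)

lemma rdegree_le_det_summand:
  "proper_mat A \<Longrightarrow> rdegree_le 0 (of_int (sign p) * (\<Prod>i\<in>UNIV. A $ i $ p i))"
proof -
  assume "proper_mat A"
  then have "rdegree_le 0 (\<Prod>i\<in>UNIV. A $ i $ p i)"
    by (intro rdegree_le_prod) (simp add: proper_mat_iff)
  then show ?thesis using rdegree_le_mult[OF rdegree_le_of_int_sign] by fastforce
qed

lemma proper_det: "proper_mat (A::'a::field ratf^'n^'n) \<Longrightarrow> rdegree_le 0 (det A)"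
  unfolding det_def by (intro rdegree_le_sum rdegree_le_det_summand)

lemma value_at_inf_det:
  assumes "proper_mat (A::'a::field ratf^'n^'n)"
  shows "value_at_inf (det A) = det (value_at_inf_mat A)"
  unfolding det_def
proof (subst value_at_inf_sum, intro rdegree_le_det_summand[OF assms], rule sum.cong[OF refl])
  fix p
  have "\<And>i. rdegree_le 0 (A $ i $ p i)" using assms by (simp add: proper_mat_iff)
  then show "value_at_inf (of_int (sign p) * (\<Prod>i\<in>UNIV. A $ i $ p i))
      = of_int (sign p) * (\<Prod>i\<in>UNIV. value_at_inf_mat A $ i $ p i)"
    by (simp add: value_at_inf_mult rdegree_le_of_int_sign rdegree_le_prod value_at_inf_prod
        value_at_inf_of_int_sign value_at_inf_mat_def)
qed

definition biproper :: "'a::field ratf^'n^'n \<Rightarrow> bool" where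
  "biproper B \<longleftrightarrow> invertible B \<and> proper_mat B \<and> proper_mat (matrix_inv B)"

text \<open>Cramer's rule: the inverse of \<open>H\<close> is the adjugate divided by \<open>det H\<close>, which is a unit of
  the ring of proper functions.\<close>

lemma biproper_if_value_at_inf_det:
  assumes H: "proper_mat (H::'a::field ratf^'n^'n)" and det: "det (value_at_inf_mat H) \<noteq> 0"
  shows "biproper H"
proof -
  have "value_at_inf (det H) \<noteq> 0" using value_at_inf_det[OF H] det by simp
  then have det_nz: "det H \<noteq> 0" and inv_det: "rdegree_le 0 (inverse (det H))"
    using value_at_inf_nonzero[OF proper_det[OF H]] by auto
  have inv: "invertible H" using det_nz invertible_det_nz by blast
  have "rdegree_le 0 (matrix_inv H $ k $ j)" for k j
  proof -
    let ?C = "\<chi> i l. if l = k then axis j 1 $ i else H $ i $ l"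
    have "H *v (matrix_inv H *v axis j 1) = axis j 1"
      by (rule matrix_inv_cancel_right[OF inv])
    then have "matrix_inv H *v axis j 1 = (\<chi> k. det (\<chi> i l. if l = k then axis j 1 $ i else H $ i $ l) / det H)"
      using cramer[OF det_nz] by blast
    then have "matrix_inv H $ k $ j = det ?C * inverse (det H)"
      using matrix_vector_mult_axis[of "matrix_inv H" j 1 k] by (simp add: divide_inverse)
    moreover have "proper_mat ?C"
      using H by (auto simp: proper_mat_iff axis_def rdegree_le_1)
    ultimately show ?thesis using rdegree_le_mult[OF proper_det inv_det] by simp
  qed
  then show ?thesis using inv H by (simp add: biproper_def proper_mat_iff)
qed

lemma biproper_mult: "biproper A \<Longrightarrow> biproper B \<Longrightarrow> biproper (A ** B)"
proof -
  assume A: "biproper A" and B: "biproper B"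
  then have "(A ** B) ** (matrix_inv B ** matrix_inv A) = mat 1"
    using matrix_inv_right[of A] matrix_inv_right[of B]
    by (simp add: biproper_def matrix_mul_assoc) (simp flip: matrix_mul_assoc)
  then have "invertible (A ** B)" "matrix_inv (A ** B) = matrix_inv B ** matrix_inv A"
    by (rule matrix_inv_unique)+
  then show ?thesis using A B by (simp add: biproper_def proper_mat_mult)
qed

lemma biproper_mat_1: "biproper (mat 1 :: 'a::field ratf^'n^'n)"
  using matrix_inv_unique[of "mat 1 :: 'a ratf^'n^'n" "mat 1"]
  by (simp add: biproper_def proper_mat_mat_1)

lemma rdegree_det_mult_biproper:
  assumes M: "invertible (M::'a::field ratf^'n^'n)" and B: "biproper B"
  shows "rdegree (det (M ** B)) = rdegree (det M)"
proof -
  have "det B * det (matrix_inv B) = 1"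
    using B matrix_inv_right[of B] by (metis biproper_def det_I det_mul)
  then have nz: "det B \<noteq> 0" "det (matrix_inv B) \<noteq> 0" by auto
  have "rdegree (det B) + rdegree (det (matrix_inv B)) = 0"
    using rdegree_mult[OF nz] \<open>det B * det (matrix_inv B) = 1\<close> by simp
  moreover have "rdegree (det B) \<le> 0" "rdegree (det (matrix_inv B)) \<le> 0"
    using B proper_det nz by (auto simp: biproper_def rdegree_le_def)
  moreover have "det M \<noteq> 0" using M invertible_det_nz by blast
  ultimately show ?thesis using nz by (simp add: det_mul rdegree_mult)
qed

lemma biproper_column_operation:
  fixes u :: "'n::finite \<Rightarrow> 'a::field ratf"
  assumes u: "\<And>r. rdegree_le 0 (u r)" and "u j = 1"
  shows "biproper (\<chi> r k. if k = j then u r else mat 1 $ r $ k)"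
proof (rule biproper_if_value_at_inf_det)
  show "proper_mat (\<chi> r k. if k = j then u r else mat 1 $ r $ k)"
    using u by (simp add: proper_mat_iff mat_def rdegree_le_1)
  let ?v = "\<chi> r. value_at_inf (u r)"
  have "value_at_inf_mat (\<chi> r k. if k = j then u r else mat 1 $ r $ k)
      = (\<chi> i k. if k = j then ?v $ i else (mat 1::'a^'n^'n) $ i $ k)"
    by (simp add: vec_eq_iff value_at_inf_mat_def mat_def)
  moreover have "det (\<chi> i k. if k = j then (mat 1 *v ?v) $ i else (mat 1::'a^'n^'n) $ i $ k)
      = ?v $ j * det (mat 1::'a^'n^'n)"
    by (rule cramer_lemma)
  then have "det (\<chi> i k. if k = j then ?v $ i else (mat 1::'a^'n^'n) $ i $ k) = ?v $ j"
    by (simp only: matrix_vector_mul_lid det_I mult_1_right)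
  ultimately show "det (value_at_inf_mat (\<chi> r k. if k = j then u r else mat 1 $ r $ k)) \<noteq> 0"
    using \<open>u j = 1\<close> by simp
qed

section \<open>Column reduction\<close>

text \<open>For a zero column the maximum is taken over the empty set; only invertible matrices matter.\<close>

definition col_degree :: "'a::field ratf^'n^'n \<Rightarrow> 'n \<Rightarrow> int" where
  "col_degree M j = Max ((\<lambda>i. rdegree (M $ i $ j)) ` {i. M $ i $ j \<noteq> 0})"

definition col_degree_sum :: "'a::field ratf^'n^'n \<Rightarrow> int" where
  "col_degree_sum M = (\<Sum>j\<in>UNIV. col_degree M j)"

definition col_normalized :: "'a::field ratf^'n^'n \<Rightarrow> 'a ratf^'n^'n" where
  "col_normalized M = M ** diag_mat (\<lambda>j. s_pow (- col_degree M j))"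

lemma rdegree_le_col_degree: "rdegree_le (col_degree M j) (M $ i $ j)"
  unfolding rdegree_le_def col_degree_def by (cases "M $ i $ j = 0") (auto intro!: Max_ge)

lemma col_degree_le: "M $ i0 $ j \<noteq> 0 \<Longrightarrow> (\<And>i. rdegree_le k (M $ i $ j)) \<Longrightarrow> col_degree M j \<le> k"
  unfolding col_degree_def rdegree_le_def by (subst Max_le_iff) auto

lemma invertible_column_nonzero:
  assumes "invertible (M::'a::field ratf^'n^'n)"
  obtains i where "M $ i $ j \<noteq> 0"
proof -
  have "M *v axis j 1 \<noteq> 0"
    using matrix_inv_cancel_left[OF assms, of "axis j 1"] by (auto simp: axis_eq_0_iff)
  then show ?thesis using that by (auto simp: vec_eq_iff matrix_vector_mult_axis)
qed

lemma proper_mat_col_normalized: "proper_mat (col_normalized M)"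
  unfolding proper_mat_iff col_normalized_def matrix_mult_diag_mat
  using rdegree_le_mult_s_pow[OF rdegree_le_col_degree] by (metis add.right_inverse)

lemma col_normalized_factor: "M = col_normalized M ** diag_mat (\<lambda>j. s_pow (col_degree M j))"
  unfolding col_normalized_def matrix_mul_assoc[symmetric] diag_mat_mult_diag_mat
  by (simp flip: s_pow_add add: diag_mat_1)

lemma rdegree_det_le_col_degree_sum:
  assumes "invertible (M::'a::field ratf^'n^'n)"
  shows "rdegree (det M) \<le> col_degree_sum M"
proof -
  have det: "det M = det (col_normalized M) * s_pow (col_degree_sum M)"
    by (subst col_normalized_factor) (simp add: det_mul det_diag_mat prod_s_pow col_degree_sum_def)
  moreover have "det M \<noteq> 0" using assms invertible_det_nz by blast
  ultimately have "det (col_normalized M) \<noteq> 0" by auto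
  then have "rdegree (det M) = rdegree (det (col_normalized M)) + col_degree_sum M"
    using det rdegree_mult[OF _ s_pow_nonzero] by (simp add: rdegree_s_pow)
  moreover have "rdegree (det (col_normalized M)) \<le> 0"
    using proper_det[OF proper_mat_col_normalized[of M]] \<open>det (col_normalized M) \<noteq> 0\<close>
    by (simp add: rdegree_le_def)
  ultimately show ?thesis by simp
qed

lemma det_eq_0_imp_kernel:
  assumes "det (A::'a::field^'n^'n) = 0"
  obtains c where "c \<noteq> 0" "A *v c = 0"
proof -
  have "\<not> inj ((*v) A)"
    using det_nz_iff_inj_gen[of "(*v) A"] assms matrix_vector_mul_linear_gen by simp
  then obtain x y where "x \<noteq> y" "A *v x = A *v y" unfolding inj_on_def by blast
  then show ?thesis using that[of "x - y"] by (simp add: matrix_vector_mult_diff_distrib)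
qed

lemma strictly_proper_if_value_at_inf_kernel:
  assumes H: "proper_mat (H::'a::field ratf^'n^'m)" and c: "value_at_inf_mat H *v c = 0"
  shows "strictly_proper ((H *v (\<chi> r. ratf_const (c $ r))) $ i)"
proof (rule value_at_inf_eq_0_imp_strictly_proper)
  have entry: "rdegree_le 0 (H $ i $ r * ratf_const (c $ r))" for r
    using H rdegree_le_mult[OF _ proper_ratf_const, of 0] by (fastforce simp: proper_mat_iff)
  then show "rdegree_le 0 ((H *v (\<chi> r. ratf_const (c $ r))) $ i)"
    by (simp add: matrix_vector_mult_def rdegree_le_sum)
  have "value_at_inf ((H *v (\<chi> r. ratf_const (c $ r))) $ i) = (value_at_inf_mat H *v c) $ i"
    using entry H
    by (simp add: matrix_vector_mult_def value_at_inf_sum value_at_inf_mult proper_ratf_const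
        value_at_inf_mat_def proper_mat_iff)
  then show "value_at_inf ((H *v (\<chi> r. ratf_const (c $ r))) $ i) = 0"
    using c by simp
qed

lemma matrix_mult_column_operation:
  "(M ** (\<chi> r k. if k = j then u r else mat 1 $ r $ k)) $ i $ k
    = (if k = j then (\<Sum>r\<in>UNIV. M $ i $ r * u r) else M $ i $ k)"
proof (cases "k = j")
  case False
  then have "(M ** (\<chi> r k. if k = j then u r else mat 1 $ r $ k)) $ i $ k = (M ** mat 1) $ i $ k"
    unfolding matrix_matrix_mult_def by simp
  with False show ?thesis by simp
qed (simp add: matrix_matrix_mult_def)

lemma matrix_mult_reduction_column:
  fixes M :: "'a::field ratf^'n^'n"
  defines "d \<equiv> col_degree M"
  shows "(M ** (\<chi> r k. if k = j then ratf_const (c $ r / c $ j) * s_pow (d j - d r) else mat 1 $ r $ k))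
      $ i $ j = s_pow (d j) * ratf_const (inverse (c $ j)) * (col_normalized M *v (\<chi> r. ratf_const (c $ r))) $ i"
proof -
  let ?H = "col_normalized M"
  have "M $ i $ r * (ratf_const (c $ r / c $ j) * s_pow (d j - d r))
      = s_pow (d j) * ratf_const (inverse (c $ j)) * (?H $ i $ r * ratf_const (c $ r))" for r
  proof -
    have "M $ i $ r = ?H $ i $ r * s_pow (d r)"
      unfolding d_def by (subst col_normalized_factor) (simp add: matrix_mult_diag_mat)
    moreover have "ratf_const (c $ r / c $ j) = ratf_const (c $ r) * ratf_const (inverse (c $ j))"
      by (simp add: divide_inverse ratf_const_mult)
    ultimately have "M $ i $ r * (ratf_const (c $ r / c $ j) * s_pow (d j - d r))
        = ?H $ i $ r * ratf_const (c $ r) * ratf_const (inverse (c $ j)) * (s_pow (d r) * s_pow (d j - d r))"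
      by (simp add: ac_simps)
    also have "s_pow (d r) * s_pow (d j - d r) = s_pow (d j)"
      by (simp flip: s_pow_add)
    finally show ?thesis by (simp add: ac_simps)
  qed
  then show ?thesis
    by (simp add: matrix_mult_column_operation matrix_vector_mult_def sum_distrib_left)
qed

text \<open>One step of column reduction: if the leading coefficient matrix is singular, a kernel vector
  \<open>c\<close> gives a biproper column operation that adds to the column \<open>j\<close> of least degree in the
  support of \<open>c\<close> a combination of the others cancelling its leading term.\<close>

lemma col_degree_sum_decrease:
  fixes M :: "'a::field ratf^'n^'n"
  assumes M: "invertible M" and singular: "det (value_at_inf_mat (col_normalized M)) = 0"
  obtains T where "biproper T" "col_degree_sum (M ** T) < col_degree_sum M"
proof -
  define H where "H = col_normalized M"
  define d where "d = col_degree M"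
  obtain c where c: "c \<noteq> 0" "value_at_inf_mat H *v c = 0"
    using det_eq_0_imp_kernel singular H_def by blast
  define S where "S = {i. c $ i \<noteq> 0}"
  have S: "finite S" "S \<noteq> {}" using c(1) by (auto simp: S_def vec_eq_iff)
  define j where "j = arg_min_on d S"
  have j: "c $ j \<noteq> 0" and j_least: "\<And>r. c $ r \<noteq> 0 \<Longrightarrow> d j \<le> d r"
    using arg_min_if_finite(1)[OF S, of d] arg_min_least[OF S, of _ d] by (auto simp: j_def S_def)
  define u where "u r = ratf_const (c $ r / c $ j) * s_pow (d j - d r)" for r
  define T where "T = (\<chi> r k. if k = j then u r else mat 1 $ r $ k)"
  have "rdegree_le 0 (u r)" for r
  proof (cases "c $ r = 0")
    case False
    then have "rdegree_le 0 (s_pow (d j - d r))"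
      using j_least by (intro rdegree_le_mono[OF rdegree_le_s_pow]) simp
    then show ?thesis using rdegree_le_mult[OF proper_ratf_const] u_def by fastforce
  qed (simp add: u_def)
  moreover have "u j = 1" using j by (simp add: u_def)
  ultimately have T: "biproper T" unfolding T_def by (rule biproper_column_operation)
  have "(M ** T) $ i $ j
      = s_pow (d j) * ratf_const (inverse (c $ j)) * (H *v (\<chi> r. ratf_const (c $ r))) $ i" for i
    unfolding T_def u_def d_def H_def by (rule matrix_mult_reduction_column)
  then have "rdegree_le (d j - 1) ((M ** T) $ i $ j)" for i
    using rdegree_le_mult[OF rdegree_le_mult[OF rdegree_le_s_pow proper_ratf_const]
        strictly_proper_if_value_at_inf_kernel[OF proper_mat_col_normalized c(2)[unfolded H_def]]]
    by (simp add: H_def)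
  moreover have "invertible (M ** T)" using M T invertible_mult biproper_def by blast
  then obtain i0 where "(M ** T) $ i0 $ j \<noteq> 0" by (rule invertible_column_nonzero)
  ultimately have col_j: "col_degree (M ** T) j < d j"
    using col_degree_le by fastforce
  have col_other: "col_degree (M ** T) k = d k" if "k \<noteq> j" for k
    using that by (simp add: col_degree_def d_def T_def matrix_mult_column_operation)
  have "col_degree_sum (M ** T) < col_degree_sum M"
    unfolding col_degree_sum_def
  proof (rule sum_strict_mono_ex1)
    show "\<forall>k\<in>UNIV. col_degree (M ** T) k \<le> col_degree M k"
      using col_j col_other by (metis d_def order.refl order.strict_implies_order)
  qed (use col_j d_def in auto)
  with T show ?thesis using that by blast
qed
text \<open>Repeating the step, which stops since \<open>col_degree_sum\<close> is bounded below by \<open>rdegree (det M)\<close>,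
  brings an invertible \<open>M\<close> to column reduced form \<open>M B = H diag(s\<^sup>d\<^sub>j)\<close>.\<close>

lemma column_reduction:
  fixes M :: "'a::field ratf^'n^'n"
  assumes M: "invertible M"
  obtains B H d where "biproper B" "biproper H" "M ** B = H ** diag_mat (\<lambda>j. s_pow (d j))"
proof -
  define \<mu> where "\<mu> B = nat (col_degree_sum (M ** B) - rdegree (det M))" for B :: "'a ratf^'n^'n"
  obtain B where B: "biproper B" and B_min: "\<And>B'. biproper B' \<Longrightarrow> \<mu> B \<le> \<mu> B'"
    using ex_has_least_nat[of biproper "mat 1" \<mu>] biproper_mat_1 by blast
  have MB: "invertible (M ** B)" using M B biproper_def invertible_mult by blast
  have "det (value_at_inf_mat (col_normalized (M ** B))) \<noteq> 0"
  proof
    assume "det (value_at_inf_mat (col_normalized (M ** B))) = 0"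
    then obtain T where T: "biproper T" "col_degree_sum (M ** B ** T) < col_degree_sum (M ** B)"
      using col_degree_sum_decrease[OF MB] by blast
    have MBT: "invertible (M ** B ** T)"
      using MB T(1) invertible_mult biproper_def by blast
    have "rdegree (det M) \<le> col_degree_sum (M ** B)"
      using rdegree_det_le_col_degree_sum[OF MB] rdegree_det_mult_biproper[OF M B] by simp
    moreover have "rdegree (det M) \<le> col_degree_sum (M ** B ** T)"
      using rdegree_det_le_col_degree_sum[OF MBT]
        rdegree_det_mult_biproper[OF MB T(1)] rdegree_det_mult_biproper[OF M B]
      by simp
    ultimately have "\<mu> (B ** T) < \<mu> B"
      using T(2) by (simp add: \<mu>_def matrix_mul_assoc)
    then show False using B_min[OF biproper_mult[OF B T(1)]] by simp
  qed
  then have "biproper (col_normalized (M ** B))"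
    by (rule biproper_if_value_at_inf_det[OF proper_mat_col_normalized])
  then show ?thesis using that[OF B] col_normalized_factor[of "M ** B"] by blast
qed

section \<open>Homomorphisms are induced by intertwining matrices\<close>

lemma column_reduced_inverse:
  fixes M :: "'a::field ratf^'n^'n" and d :: "'n \<Rightarrow> int"
  assumes M: "invertible M" and B: "invertible B" and H: "invertible H"
    and MBH: "M ** B = H ** diag_mat (\<lambda>j. s_pow (d j))"
  shows "matrix_inv M ** H = B ** diag_mat (\<lambda>j. s_pow (- d j))"
    and "matrix_inv H ** M = diag_mat (\<lambda>j. s_pow (d j)) ** matrix_inv B"
proof -
  have D: "diag_mat (\<lambda>j. s_pow (d j)) ** diag_mat (\<lambda>j. s_pow (- d j)) = (mat 1 :: 'a ratf^'n^'n)"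
    by (simp add: diag_mat_mult_diag_mat diag_mat_1 flip: s_pow_add)
  have "matrix_inv M ** H = matrix_inv M ** (H ** diag_mat (\<lambda>j. s_pow (d j))) ** diag_mat (\<lambda>j. s_pow (- d j))"
    by (simp add: D flip: matrix_mul_assoc)
  also have "\<dots> = B ** diag_mat (\<lambda>j. s_pow (- d j))"
    by (simp flip: MBH add: matrix_mul_assoc matrix_inv_left[OF M])
  finally show "matrix_inv M ** H = B ** diag_mat (\<lambda>j. s_pow (- d j))" .
  have "matrix_inv H ** M = matrix_inv H ** (M ** B) ** matrix_inv B"
    by (simp add: matrix_inv_right[OF B] flip: matrix_mul_assoc)
  also have "\<dots> = diag_mat (\<lambda>j. s_pow (d j)) ** matrix_inv B"
    by (simp add: MBH matrix_mul_assoc matrix_inv_left[OF H])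
  finally show "matrix_inv H ** M = diag_mat (\<lambda>j. s_pow (d j)) ** matrix_inv B" .
qed

context
  fixes L :: "'a::field poly ^'n^'n" and L1 :: "'a poly ^'m^'m" and T :: "'a ratf ^'n^'m"
    and B H :: "'a ratf^'n^'n" and d :: "'n \<Rightarrow> int"
  assumes det_L: "det L \<noteq> 0" and det_L1: "det L1 \<noteq> 0"
    and kernel: "\<And>y. y \<in> proper_vecs \<Longrightarrow> rho L y = 0 \<Longrightarrow> rho L1 (T *v y) = 0"
    and B: "biproper B" and H: "biproper H"
    and LBH: "emb_mat L ** B = H ** diag_mat (\<lambda>j. s_pow (d j))"
begin

text \<open>The column \<open>H e\<^sub>i s\<^sup>e\<close> lies in the kernel of \<open>\<rho>\<^sup>L\<close> as soon as \<open>e \<le> min 0 (d\<^sub>i - 1)\<close>,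
  which bounds the degrees in column \<open>i\<close> of \<open>L\<^sub>1\<^sup>-\<^sup>1 T H\<close>.\<close>

lemma kernel_preserving_column_bound:
  assumes e: "e \<le> 0" "e \<le> d i - 1"
  shows "strictly_proper ((matrix_inv (emb_mat L1) ** T ** H) $ k $ i * s_pow e)"
proof -
  let ?y = "H *v axis i (s_pow e)"
  have "?y \<in> proper_vecs"
    using H rdegree_le_mono[OF rdegree_le_s_pow e(1)]
    by (intro proper_vecs_matrix_vector_mult proper_vecs_axis) (simp_all add: biproper_def)
  moreover have "strictly_proper_vec (matrix_inv (emb_mat L) *v ?y)"
  proof -
    have "matrix_inv (emb_mat L) ** H = B ** diag_mat (\<lambda>j. s_pow (- d j))"
      using column_reduced_inverse(1)[OF invertible_emb_mat[OF det_L] _ _ LBH] B H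
      by (simp add: biproper_def)
    then have "matrix_inv (emb_mat L) *v ?y = B *v (diag_mat (\<lambda>j. s_pow (- d j)) *v axis i (s_pow e))"
      by (simp add: matrix_vector_mul_assoc)
    then have Li_y: "matrix_inv (emb_mat L) *v ?y = B *v axis i (s_pow (- d i) * s_pow e)"
      by (simp add: diag_mat_vector_mult_axis)
    have "strictly_proper (s_pow (- d i) * s_pow e)"
      using rdegree_le_mono[OF rdegree_le_s_pow, of "e - d i" "-1"] e(2) by (simp flip: s_pow_add)
    then show ?thesis
      unfolding Li_y using B
      by (intro strictly_proper_vec_matrix_vector_mult strictly_proper_vec_axis) (simp_all add: biproper_def)
  qed
  ultimately have "strictly_proper_vec (matrix_inv (emb_mat L1) *v (T *v ?y))"
    using kernel rho_eq_0_iff[OF det_L] rho_eq_0_iff[OF det_L1] by blast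
  then show ?thesis
    by (simp add: strictly_proper_vec_def matrix_vector_mul_assoc matrix_vector_mult_axis
        flip: matrix_mul_assoc)
qed

text \<open>Projecting away the columns of \<open>H\<close> of positive degree, which lie in the kernel of \<open>\<rho>\<^sup>L\<close>,
  turns \<open>T\<close> into a matrix inducing the same map whose conjugate \<open>L\<^sub>1\<^sup>-\<^sup>1 \<Theta> L\<close> is proper.\<close>

lemma proper_mat_truncated_conjugate:
  "proper_mat (matrix_inv (emb_mat L1) **
      (T ** (H ** diag_mat (\<lambda>i. if d i \<le> 0 then 1 else 0) ** matrix_inv H)) ** emb_mat L)"
proof -
  let ?G = "matrix_inv (emb_mat L1) ** T ** H"
  let ?D = "diag_mat (\<lambda>i. (if d i \<le> 0 then 1 else 0) * s_pow (d i))"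
  have "matrix_inv (emb_mat L1) ** (T ** (H ** diag_mat (\<lambda>i. if d i \<le> 0 then 1 else 0) ** matrix_inv H))
      ** emb_mat L = ?G ** (diag_mat (\<lambda>i. if d i \<le> 0 then 1 else 0) ** (matrix_inv H ** emb_mat L))"
    by (simp add: matrix_mul_assoc)
  also have "\<dots> = ?G ** ?D ** matrix_inv B"
    using column_reduced_inverse(2)[OF invertible_emb_mat[OF det_L] _ _ LBH] B H
    by (simp add: biproper_def diag_mat_mult_diag_mat matrix_mul_assoc)
  finally have eq: "matrix_inv (emb_mat L1) **
      (T ** (H ** diag_mat (\<lambda>i. if d i \<le> 0 then 1 else 0) ** matrix_inv H)) ** emb_mat L
      = ?G ** ?D ** matrix_inv B" .
  have "rdegree_le 0 (?G $ k $ i * s_pow (d i))" if "d i \<le> 0" for k i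
    using rdegree_le_mult_s_pow[OF kernel_preserving_column_bound[of "d i - 1" i k], of 1] that
    by (simp add: mult.assoc flip: s_pow_add)
  then have "proper_mat (?G ** ?D)"
    by (simp add: proper_mat_iff matrix_mult_diag_mat)
  then show ?thesis
    unfolding eq by (rule proper_mat_mult) (use B in \<open>simp add: biproper_def\<close>)
qed

lemma rho_truncated_eq:
  assumes x: "x \<in> proper_vecs"
  shows "rho L1 ((T ** (H ** diag_mat (\<lambda>i. if d i \<le> 0 then 1 else 0) ** matrix_inv H)) *v x)
    = rho L1 (T *v x)"
proof -
  let ?E = "diag_mat (\<lambda>i. if d i \<le> 0 then 1 else 0) :: 'a ratf^'n^'n"
  let ?G = "matrix_inv (emb_mat L1) ** T ** H"
  define v where "v = matrix_inv H *v x"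
  define q where "q = v - ?E *v v"
  have "H *v q = H *v (matrix_inv H *v x) - H *v (?E *v (matrix_inv H *v x))"
    by (simp add: q_def v_def matrix_vector_mult_diff_distrib)
  also have "\<dots> = x - (H ** ?E ** matrix_inv H) *v x"
    using matrix_inv_cancel_right[of H x] H
    by (simp add: biproper_def matrix_vector_mul_assoc matrix_mul_assoc)
  finally have "T *v x - (T ** (H ** ?E ** matrix_inv H)) *v x = T *v (H *v q)"
    by (simp add: matrix_vector_mult_diff_distrib matrix_vector_mul_assoc)
  then have "matrix_inv (emb_mat L1) *v (T *v x - (T ** (H ** ?E ** matrix_inv H)) *v x) = ?G *v q"
    by (simp add: matrix_vector_mul_assoc matrix_mul_assoc)
  moreover have "strictly_proper_vec (?G *v q)"
    unfolding strictly_proper_vec_def matrix_vector_mult_def vec_lambda_beta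
  proof (intro allI rdegree_le_sum)
    fix k i
    have "rdegree_le 0 (v $ i)"
      using proper_vecs_matrix_vector_mult[OF _ x, of "matrix_inv H"] H
      by (simp add: v_def biproper_def proper_vecs_iff)
    then show "strictly_proper (?G $ k $ i * q $ i)"
      using kernel_preserving_column_bound[of 0 i k] rdegree_le_mult[of "-1" "?G $ k $ i" 0]
      by (cases "d i \<le> 0") (simp_all add: q_def diag_mat_vector_mult)
  qed
  ultimately have "rho L1 (T *v x) = rho L1 ((T ** (H ** ?E ** matrix_inv H)) *v x)"
    using rho_eq_iff[OF det_L1] by simp
  then show ?thesis by simp
qed

end

lemma kernel_preserving_intertwining:
  fixes L :: "'a::field poly ^'n^'n" and L1 :: "'a poly ^'m^'m" and T :: "'a ratf ^'n^'m"
  assumes det_L: "det L \<noteq> 0" and det_L1: "det L1 \<noteq> 0" and T: "proper_mat T"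
    and kernel: "\<And>y. y \<in> proper_vecs \<Longrightarrow> rho L y = 0 \<Longrightarrow> rho L1 (T *v y) = 0"
  obtains \<Theta> \<Theta>1 :: "'a ratf ^'n^'m"
  where "proper_mat \<Theta>" "proper_mat \<Theta>1" "\<Theta> ** emb_mat L = emb_mat L1 ** \<Theta>1"
    and "\<And>x. x \<in> proper_vecs \<Longrightarrow> rho L1 (\<Theta> *v x) = rho L1 (T *v x)"
proof -
  obtain B H d where B: "biproper B" and H: "biproper H"
    and LBH: "emb_mat L ** B = H ** diag_mat (\<lambda>j. s_pow (d j))"
    using column_reduction[OF invertible_emb_mat[OF det_L]] by blast
  define \<Theta> where "\<Theta> = T ** (H ** diag_mat (\<lambda>i. if d i \<le> 0 then 1 else 0) ** matrix_inv H)"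
  define \<Theta>1 where "\<Theta>1 = matrix_inv (emb_mat L1) ** \<Theta> ** emb_mat L"
  have "proper_mat \<Theta>"
    using T H by (simp add: \<Theta>_def biproper_def proper_mat_diag_mat rdegree_le_1 proper_mat_mult)
  moreover have "\<Theta> ** emb_mat L = emb_mat L1 ** \<Theta>1"
    using matrix_inv_right[OF invertible_emb_mat[OF det_L1]] by (simp add: \<Theta>1_def matrix_mul_assoc)
  moreover note proper_mat_truncated_conjugate[OF det_L det_L1 kernel B H LBH, folded \<Theta>_def \<Theta>1_def]
    rho_truncated_eq[OF det_L det_L1 kernel B H LBH, folded \<Theta>_def]
  ultimately show ?thesis using that by blast
qed

lemma Kinf_module_hom_imp_intertwining:
  fixes L :: "'a::field poly ^'n^'n" and L1 :: "'a poly ^'m^'m"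
  assumes det_L: "det L \<noteq> 0" and det_L1: "det L1 \<noteq> 0" and hom: "Kinf_module_hom L L1 \<phi>"
  obtains \<Theta> \<Theta>1 :: "'a ratf ^'n^'m"
  where "proper_mat \<Theta>" "proper_mat \<Theta>1" "\<Theta> ** emb_mat L = emb_mat L1 ** \<Theta>1"
    and "\<forall>xb\<in>U L. \<phi> xb = rho_e L1 (\<Theta> *v xb)"
proof -
  obtain T where T: "proper_mat T" and \<phi>_T: "\<And>x. x \<in> proper_vecs \<Longrightarrow> \<phi> (rho L x) = rho L1 (T *v x)"
    using Kinf_module_hom_matrix[OF det_L det_L1 hom] by blast
  have "rho L1 (T *v y) = 0" if "y \<in> proper_vecs" "rho L y = 0" for y
    using \<phi>_T[OF that(1)] \<phi>_T[of 0] that(2) by (simp add: proper_vecs_iff)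
  then obtain \<Theta> \<Theta>1 where \<Theta>: "proper_mat \<Theta>" "proper_mat \<Theta>1" "\<Theta> ** emb_mat L = emb_mat L1 ** \<Theta>1"
    and \<Theta>_T: "\<And>x. x \<in> proper_vecs \<Longrightarrow> rho L1 (\<Theta> *v x) = rho L1 (T *v x)"
    using kernel_preserving_intertwining[OF det_L det_L1 T] by blast
  have "\<phi> (rho L x) = rho_e L1 (\<Theta> *v rho L x)" if "x \<in> proper_vecs" for x
    using \<phi>_T[OF that] \<Theta>_T[OF that] rho_intertwining_mult_rho[OF det_L det_L1 \<Theta>(2,3)]
    by (simp add: rho_e_eq_rho)
  then show ?thesis using that[OF \<Theta>] by (auto simp: U_def)
qed

theorem theorem3p3:
  fixes L :: "'a::field poly ^'n^'n" and L1 :: "'a poly ^'m^'m"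
    and \<phi> :: "'a ratf ^'n \<Rightarrow> 'a ratf ^'m"
  assumes "det L \<noteq> 0" and "det L1 \<noteq> 0"
  shows "(Kinf_module_hom L L1 \<phi> \<longleftrightarrow>
            (\<exists>(\<Theta>::'a ratf ^'n^'m) (\<Theta>1::'a ratf ^'n^'m).
               proper_mat \<Theta> \<and> proper_mat \<Theta>1 \<and> \<Theta> ** emb_mat L = emb_mat L1 ** \<Theta>1 \<and>
               (\<forall>xb\<in>U L. \<phi> xb = rho_e L1 (\<Theta> *v xb))))
       \<and> (\<forall>(\<Theta>::'a ratf ^'n^'m) (\<Theta>1::'a ratf ^'n^'m).
            proper_mat \<Theta> \<and> proper_mat \<Theta>1 \<and> \<Theta> ** emb_mat L = emb_mat L1 ** \<Theta>1 \<longrightarrow>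
            (\<forall>x\<in>proper_vecs. rho_e L1 (\<Theta> *v rho L x) = rho L1 (\<Theta> *v x)))"
proof (intro conjI iffI allI impI ballI)
  assume "Kinf_module_hom L L1 \<phi>"
  then obtain \<Theta> \<Theta>1 :: "'a ratf ^'n^'m"
    where "proper_mat \<Theta>" "proper_mat \<Theta>1" "\<Theta> ** emb_mat L = emb_mat L1 ** \<Theta>1"
      and "\<forall>xb\<in>U L. \<phi> xb = rho_e L1 (\<Theta> *v xb)"
    by (rule Kinf_module_hom_imp_intertwining[OF assms])
  then show "\<exists>\<Theta> \<Theta>1. proper_mat \<Theta> \<and> proper_mat \<Theta>1 \<and> \<Theta> ** emb_mat L = emb_mat L1 ** \<Theta>1 \<and>
      (\<forall>xb\<in>U L. \<phi> xb = rho_e L1 (\<Theta> *v xb))"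
    by blast
next
  assume "\<exists>(\<Theta>::'a ratf ^'n^'m) \<Theta>1. proper_mat \<Theta> \<and> proper_mat \<Theta>1 \<and>
      \<Theta> ** emb_mat L = emb_mat L1 ** \<Theta>1 \<and> (\<forall>xb\<in>U L. \<phi> xb = rho_e L1 (\<Theta> *v xb))"
  then show "Kinf_module_hom L L1 \<phi>"
    using Kinf_module_hom_if_intertwining[OF assms] by blast
next
  fix \<Theta> \<Theta>1 :: "'a ratf ^'n^'m" and x
  assume "proper_mat \<Theta> \<and> proper_mat \<Theta>1 \<and> \<Theta> ** emb_mat L = emb_mat L1 ** \<Theta>1"
  then show "rho_e L1 (\<Theta> *v rho L x) = rho L1 (\<Theta> *v x)"
    using rho_intertwining_mult_rho[OF assms, of \<Theta>1 \<Theta> x] by (simp add: rho_e_eq_rho)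
qed

end
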